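(* There is a homeomorphism $CP^3(S^1)\cong S^1\times S^2$.
   Context: $CP^3(S^1)=(S^1)^3/\mathbb Z_3$ is the cyclic product, the quotient of $(S^1)^3$ by the cyclic group of order 3 generated by cyclic permutation of the coordinates. *)

theory Defs
  imports "HOL-Analysis.Analysis"
begin

definition quotient_topology :: "'a topology \<Rightarrow> ('a \<Rightarrow> 'b) \<Rightarrow> 'b topology" where
  "quotient_topology X q =
     topology (\<lambda>U. U \<subseteq> q ` topspace X \<and> openin X {x \<in> topspace X. q x \<in> U})"

lemma istopology_quotient:
  "istopology (\<lambda>U. U \<subseteq> q ` topspace X \<and> openin X {x \<in> topspace X. q x \<in> U})"
proof -
  have 1: "{x \<in> topspace X. q x \<in> S \<inter> T} =
     {x \<in> topspace X. q x \<in> S} \<inter> {x \<in> topspace X. q x \<in> T}" for S T by auto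
  have 2: "{x \<in> topspace X. q x \<in> \<Union>K} = (\<Union>S\<in>K. {x \<in> topspace X. q x \<in> S})" for K
    by auto
  show ?thesis
    unfolding istopology_def 1 2
    by (auto intro!: openin_Int openin_Union)
qed

lemma openin_quotient_topology:
  "openin (quotient_topology X q) U \<longleftrightarrow>
     U \<subseteq> q ` topspace X \<and> openin X {x \<in> topspace X. q x \<in> U}"
  unfolding quotient_topology_def by (simp add: istopology_quotient)

definition S1 :: "complex set" where "S1 = sphere 0 1"

definition S2 :: "(real^3) set" where "S2 = sphere 0 1"

definition cycperm :: "complex \<times> complex \<times> complex \<Rightarrow> complex \<times> complex \<times> complex" where
  "cycperm = (\<lambda>(a, b, c). (b, c, a))"

definition cyc_orbit :: "complex \<times> complex \<times> complex \<Rightarrow> (complex \<times> complex \<times> complex) set" where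
  "cyc_orbit x = {x, cycperm x, cycperm (cycperm x)}"

definition torus3 :: "(complex \<times> complex \<times> complex) topology" where
  "torus3 = prod_topology (top_of_set S1) (prod_topology (top_of_set S1) (top_of_set S1))"

text \<open>The cyclic product CP^3(S^1) = (S^1)^3 / Z_3 with the quotient topology,
  points being the orbits.\<close>
definition CP3_S1 :: "(complex \<times> complex \<times> complex) set topology" where
  "CP3_S1 = quotient_topology torus3 cyc_orbit"

end

theory Submission
  imports Defs "HOL-Computational_Algebra.Fundamental_Theorem_Algebra"
begin

(* The homeomorphism CP^3(S^1) = (S^1)^3/Z_3 ~ S^1 x S^2 is induced by the map
     (a, b, c)  |->  (a b c, sgn (Re w, Im w, s)),   w = a + b + c,
     s = Im (a cnj b + b cnj c + c cnj a),
   which is invariant under cyclic rotation of (a, b, c).  Everything rests on the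
   identity 4 s^2 = R (a b c) w for a, b, c on the unit circle, where
     R p w = 27 - 18 |w|^2 - |w|^4 + 8 Re (cnj p w^3)
   is, up to the factor -p^2, the discriminant of (z - a)(z - b)(z - c).
   Injectivity modulo rotations: along a ray, R p (l w) = 4 (l s)^2 forces l = 1;
   then abc, a + b + c and ab + bc + ca = abc cnj (a + b + c) fix the multiset
   {a, b, c}, and the sign of s fixes its cyclic order.
   Surjectivity: for p on the circle and a direction y on S^2 the intermediate value
   theorem yields a scale r with R p (r u) = 4 (r y_3)^2; the roots of
   z^3 - w z^2 + p (cnj w) z - p are closed under z |-> 1 / cnj z, and the sign of the
   discriminant forbids a root off the circle. *)

section \<open>Quotients of compact spaces\<close>

lemma quotient_map_quotient_topology:
  "quotient_map X (quotient_topology X q) q"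
proof -
  have "{x \<in> topspace X. q x \<in> q ` topspace X} = topspace X"
    by blast
  then have image_open: "openin (quotient_topology X q) (q ` topspace X)"
    by (simp add: openin_quotient_topology)
  have "topspace (quotient_topology X q) \<subseteq> q ` topspace X"
    using openin_quotient_topology[THEN iffD1, OF openin_topspace] by (rule conjunct1)
  moreover have "q ` topspace X \<subseteq> topspace (quotient_topology X q)"
    using image_open by (rule openin_subset)
  ultimately have top: "topspace (quotient_topology X q) = q ` topspace X"
    by (rule equalityI)
  show ?thesis
    unfolding quotient_map_def top by (auto simp: openin_quotient_topology)
qed

lemma homeomorphic_space_quotient_by_fibres:
  assumes q: "quotient_map X Q q" and f: "continuous_map X Y f"
    and compact: "compact_space X" and Hausdorff: "Hausdorff_space Y"
    and onto: "f ` topspace X = topspace Y"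
    and fibres: "\<And>x y. \<lbrakk>x \<in> topspace X; y \<in> topspace X\<rbrakk> \<Longrightarrow> f x = f y \<longleftrightarrow> q x = q y"
  shows "Q homeomorphic_space Y"
proof -
  obtain g where g: "continuous_map Q Y g" "g ` topspace Q = f ` topspace X"
    and g_q: "\<And>x. x \<in> topspace X \<Longrightarrow> g (q x) = f x"
    using quotient_map_lift_exists[OF q f] fibres by metis
  have topQ: "topspace Q = q ` topspace X"
    using q by (simp add: quotient_imp_surjective_map)
  have "inj_on g (topspace Q)"
  proof (rule inj_onI)
    fix u v assume "u \<in> topspace Q" "v \<in> topspace Q" "g u = g v"
    then show "u = v" unfolding topQ using g_q fibres by auto
  qed
  moreover have "compact_space Q"
    using image_compactin[OF compact[unfolded compact_space_def] quotient_imp_continuous_map[OF q]]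
    by (simp add: compact_space_def topQ)
  ultimately have "homeomorphic_map Q Y g"
    using continuous_imp_homeomorphic_map[OF g(1) _ Hausdorff] g(2) onto by simp
  then show ?thesis
    using homeomorphic_map_imp_homeomorphic_space by blast
qed

section \<open>Algebra of three points on the unit circle\<close>

lemma unit_cnj: "cmod a = 1 \<Longrightarrow> a * cnj a = 1"
  by (metis complex_norm_square mult.commute of_real_1 power_one)

lemma of_real_Re: "complex_of_real (Re z) = (z + cnj z) / 2"
  by (simp add: complex_eq_iff)

lemma of_real_Im: "complex_of_real (Im z) = (z - cnj z) / (2 * \<i>)"
  by (simp add: complex_eq_iff)

lemma four_times_square_div_2i: "4 * ((X::complex) / (2 * \<i>))^2 = - (X^2)"
  by (simp add: power_divide power_mult_distrib)

text \<open>The discriminant form R(p, w); for p = abc and w = a + b + c it equals minus the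
  discriminant of (z - a)(z - b)(z - c) divided by p^2.\<close>

definition disc_form :: "complex \<Rightarrow> complex \<Rightarrow> real" where
  "disc_form p w = 27 - 18 * (cmod w)^2 - (cmod w)^4 + 8 * Re (cnj p * w^3)"

text \<open>The orientation term \<sigma>(a, b, c); up to the factor -2 it is the signed area of the
  triangle abc, so it is invariant under rotations and changes sign under swaps.\<close>

definition tri_im :: "complex \<Rightarrow> complex \<Rightarrow> complex \<Rightarrow> real" where
  "tri_im a b c = Im (a * cnj b + b * cnj c + c * cnj a)"

lemma tri_im_rotate: "tri_im b c a = tri_im a b c"
  unfolding tri_im_def by (simp add: algebra_simps)

lemma tri_im_swap: "tri_im a c b = - tri_im a b c"
proof -
  have "a * cnj c + c * cnj b + b * cnj a = cnj (a * cnj b + b * cnj c + c * cnj a)"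
    by (simp add: algebra_simps)
  then show ?thesis unfolding tri_im_def by simp
qed

lemma disc_form_complex:
  "complex_of_real (disc_form p w) =
     27 - 18 * (w * cnj w) - (w * cnj w)^2 + 4 * (cnj p * w^3 + p * cnj w ^ 3)"
proof -
  have "complex_of_real ((cmod w)^4) = (w * cnj w)^2"
    by (metis complex_norm_square of_real_power power_mult num_double numeral_times_numeral)
  moreover have "complex_of_real (Re (cnj p * w^3)) = (cnj p * w^3 + p * cnj w ^ 3) / 2"
    by (simp only: of_real_Re complex_cnj_mult complex_cnj_cnj complex_cnj_power)
  moreover have "complex_of_real ((cmod w)^2) = w * cnj w" by (rule complex_norm_square)
  ultimately show ?thesis unfolding disc_form_def
    by (simp only: of_real_add of_real_diff of_real_mult of_real_numeral) simp
qed

text \<open>The two polynomial identities behind everything, written with formal inverses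
  \<open>a', b', c'\<close> so that they can be checked by the Groebner basis method.\<close>

lemma tri_im_square_poly:
  fixes a b c a' b' c' :: complex
  assumes "a * a' = 1" "b * b' = 1" "c * c' = 1"
  shows "- (((a*b' + b*c' + c*a') - (a'*b + b'*c + c'*a))^2) =
    27 - 18 * ((a+b+c) * (a'+b'+c')) - ((a+b+c) * (a'+b'+c'))^2
    + 4 * (a'*b'*c' * (a+b+c)^3 + a*b*c * (a'+b'+c')^3)"
  using assms by algebra

lemma tri_im_square_vandermonde:
  fixes a b c a' b' c' :: complex
  assumes "a * a' = 1" "b * b' = 1" "c * c' = 1"
  shows "- (((a*b' + b*c' + c*a') - (a'*b + b'*c + c'*a))^2) =
    ((a-b) * (b-c) * (c-a)) * ((a'-b') * (b'-c') * (c'-a'))"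
  using assms by algebra

lemma tri_im_square:
  assumes "cmod a = 1" "cmod b = 1" "cmod c = 1"
  shows "4 * (tri_im a b c)^2 = disc_form (a*b*c) (a+b+c)"
proof -
  have inv: "a * cnj a = 1" "b * cnj b = 1" "c * cnj c = 1" using assms unit_cnj by auto
  have "complex_of_real (4 * (tri_im a b c)^2) = complex_of_real (disc_form (a*b*c) (a+b+c))"
    unfolding disc_form_complex tri_im_def of_real_mult of_real_power of_real_numeral of_real_Im
       complex_cnj_mult complex_cnj_add complex_cnj_cnj complex_cnj_power
    unfolding four_times_square_div_2i using tri_im_square_poly[OF inv] by simp
  then show ?thesis by (simp only: of_real_eq_iff)
qed

text \<open>Since 4 \<sigma>^2 = |(a - b)(b - c)(c - a)|^2, the orientation term vanishes only when two
  of the points collide.\<close>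

lemma tri_im_eq_0_imp_collision:
  assumes "cmod a = 1" "cmod b = 1" "cmod c = 1" "tri_im a b c = 0"
  shows "a = b \<or> b = c \<or> c = a"
proof -
  have inv: "a * cnj a = 1" "b * cnj b = 1" "c * cnj c = 1" using assms unit_cnj by auto
  have "complex_of_real (4 * (tri_im a b c)^2) = ((a-b) * (b-c) * (c-a)) * cnj ((a-b) * (b-c) * (c-a))"
    unfolding tri_im_def of_real_mult of_real_power of_real_numeral of_real_Im four_times_square_div_2i
       complex_cnj_mult complex_cnj_add complex_cnj_diff complex_cnj_cnj complex_cnj_power
    using tri_im_square_vandermonde[OF inv] by simp
  then have "(a-b) * (b-c) * (c-a) = 0" using assms(4) by simp
  then show ?thesis by auto
qed

lemma e2_unit_circle:
  assumes "cmod a = 1" "cmod b = 1" "cmod c = 1"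
  shows "a*b + b*c + c*a = a*b*c * cnj (a+b+c)"
proof -
  have "a * cnj a = 1" "b * cnj b = 1" "c * cnj c = 1" using assms unit_cnj by auto
  then show ?thesis unfolding complex_cnj_add by algebra
qed

section \<open>Injectivity modulo rotations\<close>

text \<open>With the first point fixed, the data abc, a + b + c and \<sigma> determine the
  remaining two points, up to a swap that is ruled out by the sign of \<sigma>.\<close>

lemma rotation_of_same_invariants_fixed_first:
  assumes u: "cmod a = 1" "cmod b = 1" "cmod c = 1"
    and p: "a*b'*c' = a*b*c" and w: "a+b'+c' = a+b+c" and s: "tri_im a b' c' = tri_im a b c"
  shows "(a,b',c') \<in> {(a,b,c),(b,c,a),(c,a,b)}"
proof -
  have "a \<noteq> 0" using u by auto
  then have prod: "b'*c' = b*c" using p by (simp add: mult.assoc)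
  have sum: "b'+c' = b+c" using w by simp
  have "(b'-b) * (b'-c) = b'^2 - (b'+c') * b' + b'*c'"
    unfolding sum prod by (simp add: algebra_simps power2_eq_square)
  also have "\<dots> = 0" by (simp add: algebra_simps power2_eq_square)
  finally have "b' = b \<or> b' = c" by simp
  then show ?thesis
  proof
    assume "b' = b"
    then show ?thesis using sum by simp
  next
    assume swap: "b' = c"
    then have "c' = b" using sum by simp
    then have "tri_im a b c = 0" using s swap tri_im_swap[of a b c] by simp
    then have "a = b \<or> b = c \<or> c = a" using tri_im_eq_0_imp_collision u by blast
    then show ?thesis using swap \<open>c' = b\<close> by auto
  qed
qed

lemma rotation_of_same_invariants:
  assumes u: "cmod a = 1" "cmod b = 1" "cmod c = 1"
    and u': "cmod a' = 1" "cmod b' = 1" "cmod c' = 1"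
    and p: "a'*b'*c' = a*b*c" and w: "a'+b'+c' = a+b+c" and s: "tri_im a' b' c' = tri_im a b c"
  shows "(a',b',c') \<in> {(a,b,c),(b,c,a),(c,a,b)}"
proof -
  have e2: "a'*b' + b'*c' + c'*a' = a*b + b*c + c*a"
    using e2_unit_circle[OF u] e2_unit_circle[OF u'] p w by simp
  have same_poly: "(z-a') * (z-b') * (z-c') = (z-a) * (z-b) * (z-c)" for z
  proof -
    have "(z-a') * (z-b') * (z-c') = z^3 - (a'+b'+c') * z^2 + (a'*b' + b'*c' + c'*a') * z - a'*b'*c'"
      by (simp add: algebra_simps power2_eq_square power3_eq_cube)
    also have "\<dots> = (z-a) * (z-b) * (z-c)"
      unfolding p w e2 by (simp add: algebra_simps power2_eq_square power3_eq_cube)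
    finally show ?thesis .
  qed
  have "(a'-a) * (a'-b) * (a'-c) = 0" using same_poly[of a'] by simp
  then consider "a' = a" | "a' = b" | "a' = c" by auto
  then show ?thesis
  proof cases
    case 1
    then show ?thesis using rotation_of_same_invariants_fixed_first[OF u] p w s by simp
  next
    case 2
    have "b*b'*c' = b*c*a" "b+b'+c' = b+c+a" "tri_im b b' c' = tri_im b c a"
      using p w s 2 tri_im_rotate[of b c a] by (simp_all add: algebra_simps)
    then have "(b,b',c') \<in> {(b,c,a),(c,a,b),(a,b,c)}"
      using rotation_of_same_invariants_fixed_first[OF u(2,3,1)] by blast
    then show ?thesis using 2 by auto
  next
    case 3
    have "c*b'*c' = c*a*b" "c+b'+c' = c+a+b" "tri_im c b' c' = tri_im c a b"
      using p w s 3 tri_im_rotate[of c a b] tri_im_rotate[of b c a] by (simp_all add: algebra_simps)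
    then have "(c,b',c') \<in> {(c,a,b),(a,b,c),(b,c,a)}"
      using rotation_of_same_invariants_fixed_first[OF u(3,1,2)] by blast
    then show ?thesis using 3 by auto
  qed
qed

text \<open>A sum-of-squares certificate: the quantity below is a positive multiple of
  l^2 (Y - 6)^2 (Y^2 + 4Y + 12) + 27 (l - 1)^2 ((1 + l)^2 + 4l) with Y = (1 + l) m.\<close>

lemma scale_polynomial_pos:
  fixes l m :: real
  assumes "l > 0" "l \<noteq> 1" "m \<ge> 0"
  shows "(1 + l) * (27 + l^2 * m^4) - 8 * l^2 * m^3 > 0"
proof -
  define k where "k = 1 + l"
  define Y where "Y = k * m"
  have k0: "k > 0" using assms k_def by simp
  have certificate: "k^3 * ((1 + l) * (27 + l^2 * m^4) - 8 * l^2 * m^3) =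
      l^2 * (Y - 6)^2 * (Y^2 + 4*Y + 12) + 27 * (l - 1)^2 * (k^2 + 4*l)"
    unfolding Y_def k_def by algebra
  have "Y^2 + 4*Y + 12 > 0" using assms unfolding Y_def k_def
    by (smt (verit) mult_nonneg_nonneg zero_le_power2)
  then have "l^2 * (Y - 6)^2 * (Y^2 + 4*Y + 12) \<ge> 0" by simp
  moreover have "27 * (l - 1)^2 * (k^2 + 4*l) > 0"
    using assms k0 by (simp add: add_pos_nonneg)
  ultimately have "k^3 * ((1 + l) * (27 + l^2 * m^4) - 8 * l^2 * m^3) > 0"
    using certificate by linarith
  then show ?thesis using k0 by (simp add: zero_less_mult_iff)
qed

lemma Re_cnj_mult_cube_le: "cmod p = 1 \<Longrightarrow> Re (cnj p * w^3) \<le> (cmod w)^3"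
  by (metis abs_Re_le_cmod abs_le_D1 complex_mod_cnj mult_cancel_right2 norm_mult norm_power)

text \<open>Along a ray through the origin of \<open>\<complex> \<times> \<real>\<close> the relation R(p, w) = 4 \<sigma>^2 holds at
  most once: this is what makes the direction of (w, \<sigma>) a complete invariant.\<close>

lemma disc_form_scale_unique:
  fixes l s :: real
  assumes p: "cmod p = 1" and l: "l > 0"
    and at_1: "disc_form p w = 4 * s^2"
    and at_l: "disc_form p (of_real l * w) = 4 * (l * s)^2"
  shows "l = 1"
proof (rule ccontr)
  assume l1: "l \<noteq> 1"
  define A where "A = cmod w"
  define c where "c = Re (cnj p * w^3)"
  have E1: "4 * s^2 = 27 - 18 * A^2 - A^4 + 8 * c"
    using at_1 unfolding disc_form_def A_def c_def by simp
  have "cmod (of_real l * w) = l * A" using l unfolding A_def by (simp add: norm_mult)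
  moreover have "Re (cnj p * (of_real l * w)^3) = l^3 * c"
    unfolding c_def by (simp add: power_mult_distrib algebra_simps)
  ultimately have E2: "4 * (l * s)^2 = 27 - 18 * (l*A)^2 - (l*A)^4 + 8 * (l^3 * c)"
    using at_l unfolding disc_form_def by simp
  have "l^2 * (4 * s^2) - 4 * (l * s)^2 = 0" by (simp add: power_mult_distrib)
  then have "l^2 * (27 - 18 * A^2 - A^4 + 8 * c) - (27 - 18 * (l*A)^2 - (l*A)^4 + 8 * (l^3 * c)) = 0"
    using E1 E2 by simp
  then have "(l - 1) * ((1 + l) * (27 + l^2 * A^4) - 8 * l^2 * c) = 0"
    by (simp add: algebra_simps power_mult_distrib)
       (simp add: power2_eq_square power3_eq_cube power4_eq_xxxx algebra_simps)
  then have "(1 + l) * (27 + l^2 * A^4) - 8 * l^2 * c = 0" using l1 by simp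
  moreover have "8 * l^2 * c \<le> 8 * l^2 * A^3"
    using Re_cnj_mult_cube_le[OF p] l unfolding c_def A_def by simp
  moreover have "A \<ge> 0" unfolding A_def by simp
  ultimately show False using scale_polynomial_pos[OF l l1, of A] by linarith
qed

section \<open>Surjectivity\<close>

text \<open>Every monic complex cubic splits: any prescribed elementary symmetric functions
  e1, e2, e3 are those of some triple (a root from the fundamental theorem of algebra,
  the other two from the quadratic formula).\<close>

lemma cubic_vieta_exists:
  fixes e1 e2 e3 :: complex
  shows "\<exists>a b c. a+b+c = e1 \<and> a*b + b*c + c*a = e2 \<and> a*b*c = e3"
proof -
  let ?P = "[:-e3, e2, -e1, 1:]"
  have "\<not> (\<exists>a l. a \<noteq> 0 \<and> l = 0 \<and> ?P = pCons a l)" by simp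
  from fundamental_theorem_of_algebra_alt[OF this] obtain a where "poly ?P a = 0" by blast
  then have root: "a^3 - e1 * a^2 + e2 * a - e3 = 0"
    by (simp add: algebra_simps power2_eq_square power3_eq_cube)
  define q where "q = a^2 - e1 * a + e2"
  define d where "d = (e1 - a)^2 - 4 * q"
  define b where "b = ((e1 - a) + csqrt d) / 2"
  define c where "c = (e1 - a) - b"
  have "b*c = ((e1 - a)^2 - (csqrt d)^2) / 4" unfolding c_def b_def
    by (simp add: field_simps power2_eq_square)
  then have "b*c = q" unfolding d_def by simp
  then have bc: "b*c = a^2 - e1 * a + e2" unfolding q_def .
  have sum: "a+b+c = e1" unfolding c_def by simp
  have "a*b + b*c + c*a = a * (e1 - a) + b*c"
    unfolding c_def by (simp add: algebra_simps)
  then have e2: "a*b + b*c + c*a = e2"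
    unfolding bc by (simp add: algebra_simps power2_eq_square)
  have "a*b*c = a^3 - e1 * a^2 + e2 * a"
    unfolding mult.assoc[of a] bc by (simp add: algebra_simps power2_eq_square power3_eq_cube)
  then have "a*b*c = e3" using root by simp
  then show ?thesis using sum e2 by blast
qed

lemma reflected_root:
  assumes p: "cmod p = 1" and r0: "r \<noteq> 0" and root: "r^3 - w * r^2 + p * cnj w * r - p = 0"
  shows "(1 / cnj r)^3 - w * (1 / cnj r)^2 + p * cnj w * (1 / cnj r) - p = 0"
proof -
  have "cnj p * p = 1" using unit_cnj[OF p] by (simp add: mult.commute)
  have "cnj r \<noteq> 0" using r0 by simp
  have "(1 / cnj r)^3 - w * (1 / cnj r)^2 + p * cnj w * (1 / cnj r) - p =
      (- p / cnj r ^ 3) * cnj (r^3 - w * r^2 + p * cnj w * r - p)"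
    using \<open>cnj p * p = 1\<close> \<open>cnj r \<noteq> 0\<close>
    by (simp add: field_simps power2_eq_square power3_eq_cube)
  then show ?thesis using root by simp
qed

lemma discriminant_disc_form:
  fixes a b c p w :: complex
  assumes p: "cmod p = 1" and "a + b + c = w" "a*b + b*c + c*a = p * cnj w" "a*b*c = p"
  shows "((a-b) * (b-c) * (c-a))^2 = - (p^2) * complex_of_real (disc_form p w)"
proof -
  have "((a-b) * (b-c) * (c-a))^2 = (a+b+c)^2 * (a*b + b*c + c*a)^2 - 4 * (a*b + b*c + c*a)^3
      - 4 * (a+b+c)^3 * (a*b*c) + 18 * (a+b+c) * (a*b + b*c + c*a) * (a*b*c) - 27 * (a*b*c)^2"
    by (simp add: algebra_simps power2_eq_square power3_eq_cube)
  also have "\<dots> = w^2 * (p * cnj w)^2 - 4 * (p * cnj w)^3 - 4 * w^3 * p + 18 * w * (p * cnj w) * p - 27 * p^2"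
    using assms(2-4) by simp
  also have "\<dots> = - (p^2) * complex_of_real (disc_form p w)"
    unfolding disc_form_complex using unit_cnj[OF p] by algebra
  finally show ?thesis .
qed

lemma reflected_triple_ratio_real:
  fixes t z :: complex
  assumes t: "cmod t = 1" and z0: "z \<noteq> 0" and z1: "cmod z \<noteq> 1"
  shows "\<exists>r::real. r \<noteq> 0 \<and>
    ((t - z) * (z - 1 / cnj z) * (1 / cnj z - t)) / (t * z * (1 / cnj z)) = of_real r"
proof -
  define n where "n = cmod z"
  define r where "r = (n^2 - 1) * (1 + 1 / n^2 - 2 * Re (t / z))"
  have t0: "t \<noteq> 0" using t by auto
  have cnj_t: "cnj t = 1 / t" using unit_cnj[OF t] t0 by (simp add: field_simps)
  have n0: "n > 0" "n \<noteq> 1" using z0 z1 unfolding n_def by auto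
  have zz: "z * cnj z = complex_of_real (n^2)" unfolding n_def by (rule complex_norm_square[symmetric])
  have re2: "complex_of_real (2 * Re (t / z)) = t / z + cnj t / cnj z"
    by (simp only: of_real_mult of_real_numeral of_real_Re complex_cnj_divide) (simp add: algebra_simps)
  have "((t - z) * (z - 1 / cnj z) * (1 / cnj z - t)) / (t * z * (1 / cnj z))
      = (z * cnj z - 1) * (1 + 1 / (z * cnj z) - (t / z + cnj t / cnj z))"
    using t0 z0 unfolding cnj_t by (simp add: field_simps)
  also have "\<dots> = of_real r"
    unfolding r_def zz re2[symmetric] by simp
  finally have ratio: "((t - z) * (z - 1 / cnj z) * (1 / cnj z - t)) / (t * z * (1 / cnj z)) = of_real r" .
  have Re_le: "Re (t / z) \<le> 1 / n"
    using complex_Re_le_cmod[of "t / z"] t unfolding n_def by (simp add: norm_divide)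
  have "1 / n \<noteq> 1" using n0 by simp
  then have "(1 - 1 / n)^2 > 0" by simp
  moreover have "(1 - 1 / n)^2 = 1 + 1 / n^2 - 2 / n" by (simp add: power2_diff power_divide)
  ultimately have "1 + 1 / n^2 - 2 * Re (t / z) > 0" using Re_le by linarith
  moreover have "n^2 \<noteq> 1" using n0 by (simp add: power2_eq_1_iff)
  ultimately have "r \<noteq> 0" unfolding r_def by simp
  then show ?thesis using ratio by blast
qed

text \<open>Hence for z off the circle, its reflection z' and t on the circle, the squared
  Vandermonde product is (z z' t)^2 times a positive real; it can never equal
  (z z' t)^2 times a nonpositive real, which is the shape -p^2 \<cdot> 4 s^2 forced by the
  identity discriminant = -p^2 R(p, w).\<close>

lemma reflected_pair_discriminant_impossible:
  fixes z t :: complex and s :: real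
  assumes t: "cmod t = 1" and z0: "z \<noteq> 0" and z1: "cmod z \<noteq> 1"
    and D: "((z - 1 / cnj z) * (1 / cnj z - t) * (t - z))^2 =
            - ((z * (1 / cnj z) * t)^2) * complex_of_real (4 * s^2)"
  shows False
proof -
  obtain r where r: "r \<noteq> 0"
    and ratio: "((t - z) * (z - 1 / cnj z) * (1 / cnj z - t)) / (t * z * (1 / cnj z)) = of_real r"
    using reflected_triple_ratio_real[OF t z0 z1] by blast
  define P where "P = z * (1 / cnj z) * t"
  have P0: "P \<noteq> 0" using z0 t unfolding P_def by auto
  have "(z - 1 / cnj z) * (1 / cnj z - t) * (t - z) = of_real r * P"
    using ratio P0 unfolding P_def by (simp add: field_simps)
  then have "(of_real r * P)^2 = - (P^2) * complex_of_real (4 * s^2)"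
    using D[folded P_def] by simp
  then have "complex_of_real (r^2) * P^2 = complex_of_real (- (4 * s^2)) * P^2"
    by (simp add: power_mult_distrib)
  then have "complex_of_real (r^2) = complex_of_real (- (4 * s^2))"
    using mult_right_cancel[OF power_not_zero[OF P0]] by blast
  then have "r^2 = - (4 * s^2)"
    by (simp only: of_real_eq_iff)
  moreover have "r^2 > 0" using r by simp
  ultimately show False by (smt (verit) zero_le_power2)
qed

lemma root_on_circle:
  fixes a b c :: complex and s :: real
  assumes nz: "a \<noteq> 0" "b \<noteq> 0" "c \<noteq> 0" and prod: "cmod (a*b*c) = 1"
    and refl: "1 / cnj a \<in> {a, b, c}"
    and D: "((a-b) * (b-c) * (c-a))^2 = - ((a*b*c)^2) * complex_of_real (4 * s^2)"
  shows "cmod a = 1"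
proof (rule ccontr)
  assume off: "cmod a \<noteq> 1"
  have "1 / cnj a \<noteq> a"
  proof
    assume "1 / cnj a = a"
    then have "a * cnj a = 1"
      using nz by (simp add: field_simps)
    then have "complex_of_real ((cmod a)^2) = 1"
      by (simp only: complex_norm_square)
    then have "(cmod a)^2 = 1" by (metis of_real_eq_1_iff)
    then show False using off norm_ge_zero[of a] by (auto simp: power2_eq_1_iff)
  qed
  then consider "b = 1 / cnj a" | "c = 1 / cnj a" using refl by auto
  then show False
  proof cases
    case 1
    then have "cmod c = 1" using prod nz by (simp add: norm_mult norm_divide)
    then show False using reflected_pair_discriminant_impossible[OF _ nz(1) off] D 1 by blast
  next
    case 2
    then have "cmod b = 1" using prod nz by (simp add: norm_mult norm_divide)
    moreover have "((a-c) * (c-b) * (b-a))^2 = - ((a*c*b)^2) * complex_of_real (4 * s^2)"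
      using D by (simp add: algebra_simps power2_eq_square)
    ultimately show False using reflected_pair_discriminant_impossible[OF _ nz(1) off] 2 by blast
  qed
qed

text \<open>The roots a, b, c of z^3 - w z^2 + p (cnj w) z - p, with |p| = 1 and
  R(p, w) = 4 s^2 \<ge> 0, all lie on the unit circle: the roots are closed under
  reflection, and a root off the circle would contradict the sign of the discriminant.\<close>

lemma vieta_roots_on_circle:
  assumes p: "cmod p = 1" and R: "disc_form p w = 4 * s^2"
    and sum: "a+b+c = w" and e2: "a*b + b*c + c*a = p * cnj w" and prod: "a*b*c = p"
  shows "cmod a = 1 \<and> cmod b = 1 \<and> cmod c = 1"
proof -
  have p0: "p \<noteq> 0" using p by auto
  have factor: "z^3 - w * z^2 + p * cnj w * z - p = (z-a) * (z-b) * (z-c)" for z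
  proof -
    have "(z-a) * (z-b) * (z-c) = z^3 - (a+b+c) * z^2 + (a*b + b*c + c*a) * z - a*b*c"
      by (simp add: algebra_simps power2_eq_square power3_eq_cube)
    then show ?thesis unfolding sum e2 prod by simp
  qed
  have a0: "a \<noteq> 0" and b0: "b \<noteq> 0" and c0: "c \<noteq> 0" using prod p0 by auto
  have refl: "1 / cnj r \<in> {a, b, c}" if "r \<in> {a, b, c}" for r
  proof -
    have r0: "r \<noteq> 0" using that a0 b0 c0 by auto
    have root: "r^3 - w * r^2 + p * cnj w * r - p = 0" unfolding factor using that by auto
    have "(1 / cnj r - a) * (1 / cnj r - b) * (1 / cnj r - c) = 0"
      using reflected_root[OF p r0 root] unfolding factor .
    then show ?thesis by auto
  qed
  have D: "((a-b) * (b-c) * (c-a))^2 = - ((a*b*c)^2) * complex_of_real (4 * s^2)"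
    using discriminant_disc_form[OF p sum e2 prod] unfolding R prod .
  have D_rotated: "((b-c) * (c-a) * (a-b))^2 = - ((b*c*a)^2) * complex_of_real (4 * s^2)"
    "((c-a) * (a-b) * (b-c))^2 = - ((c*a*b)^2) * complex_of_real (4 * s^2)"
    using D by (simp_all add: mult_ac)
  have unit_prod: "cmod (a*b*c) = 1" "cmod (b*c*a) = 1" "cmod (c*a*b) = 1"
    using prod p by (simp_all add: mult_ac)
  have refl_abc: "1 / cnj a \<in> {a, b, c}" "1 / cnj b \<in> {b, c, a}" "1 / cnj c \<in> {c, a, b}"
    using refl by auto
  have unit_a: "cmod a = 1" by (rule root_on_circle[OF a0 b0 c0 unit_prod(1) refl_abc(1) D])
  have unit_b: "cmod b = 1" by (rule root_on_circle[OF b0 c0 a0 unit_prod(2) refl_abc(2) D_rotated(1)])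
  have unit_c: "cmod c = 1" by (rule root_on_circle[OF c0 a0 b0 unit_prod(3) refl_abc(3) D_rotated(2)])
  show ?thesis using unit_a unit_b unit_c by blast
qed

lemma realize_invariants:
  assumes p: "cmod p = 1" and R: "disc_form p w = 4 * s^2"
  shows "\<exists>a b c. cmod a = 1 \<and> cmod b = 1 \<and> cmod c = 1 \<and>
                 a*b*c = p \<and> a+b+c = w \<and> tri_im a b c = s"
proof -
  obtain a b c where sum: "a+b+c = w" and e2: "a*b + b*c + c*a = p * cnj w" and prod: "a*b*c = p"
    using cubic_vieta_exists by blast
  have unit_a: "cmod a = 1" and unit_b: "cmod b = 1" and unit_c: "cmod c = 1"
    using vieta_roots_on_circle[OF p R sum e2 prod] by auto
  have "(tri_im a b c)^2 = s^2"
    using tri_im_square[OF unit_a unit_b unit_c] prod sum R by simp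
  then have "tri_im a b c = s \<or> tri_im a b c = - s"
    by (simp add: power2_eq_iff)
  then consider "tri_im a b c = s" | "tri_im a c b = s"
    using tri_im_swap[of a b c] by force
  then show ?thesis
  proof cases
    case 1
    then show ?thesis using unit_a unit_b unit_c prod sum by blast
  next
    case 2
    moreover have "a*c*b = p" "a+c+b = w" using prod sum by (simp_all add: mult_ac add_ac)
    ultimately show ?thesis using unit_a unit_b unit_c by blast
  qed
qed

text \<open>Along every ray of \<open>\<complex> \<times> \<real>\<close> the relation R(p, w) = 4 \<sigma>^2 is met: the polynomial
  g(r) = R(p, r u) - 4 (r \<sigma>)^2 is 27 at 0 and nonpositive at 3 / |u| (or at 3 if u = 0),
  so the intermediate value theorem provides a positive root.\<close>

lemma disc_form_on_ray:
  fixes u :: complex and \<sigma> :: real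
  assumes p: "cmod p = 1" and unit: "(cmod u)^2 + \<sigma>^2 = 1"
  shows "\<exists>r > 0. disc_form p (complex_of_real r * u) = 4 * (r * \<sigma>)^2"
proof -
  define m where "m = cmod u"
  define c0 where "c0 = Re (cnj p * u^3)"
  have m0: "m \<ge> 0" unfolding m_def by simp
  have c0_le: "c0 \<le> m^3" unfolding c0_def m_def by (rule Re_cnj_mult_cube_le[OF p])
  define g where "g r = 27 - (18 * m^2 + 4 * \<sigma>^2) * r^2 + 8 * c0 * r^3 - m^4 * r^4" for r
  have g0: "g 0 = 27" unfolding g_def by simp
  obtain R where R: "R \<ge> 0" "g R \<le> 0"
  proof (cases "m = 0")
    case True
    then have "c0 = 0" "\<sigma>^2 = 1" using unit unfolding c0_def m_def by simp_all
    then have "g 3 \<le> 0" unfolding g_def using True by simp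
    then show ?thesis using that[of 3] by simp
  next
    case False
    then have mp: "m > 0" using m0 by simp
    have "g (3 / m) = -216 - 36 * \<sigma>^2 / m^2 + 216 * (c0 / m^3)"
      unfolding g_def using mp
      by (simp add: field_simps power2_eq_square power3_eq_cube power4_eq_xxxx)
    moreover have "c0 / m^3 \<le> 1" using c0_le mp by (simp add: divide_le_eq)
    moreover have "\<sigma>^2 / m^2 \<ge> 0" by simp
    ultimately have "g (3 / m) \<le> 0" by linarith
    then show ?thesis using that[of "3 / m"] mp by simp
  qed
  have "continuous_on {0..R} g" unfolding g_def by (intro continuous_intros)
  then obtain r where r: "0 \<le> r" "g r = 0"
    using IVT2'[of g R 0 0, OF R(2) _ R(1)] g0 by auto
  have r0: "r > 0" using r g0 by (cases "r = 0") auto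
  have "cmod (complex_of_real r * u) = r * m" unfolding m_def using r0 by (simp add: norm_mult)
  moreover have "Re (cnj p * (complex_of_real r * u)^3) = r^3 * c0" unfolding c0_def
    by (simp add: power_mult_distrib algebra_simps)
  ultimately have "disc_form p (complex_of_real r * u) = 4 * (r * \<sigma>)^2"
    unfolding disc_form_def using r(2) unfolding g_def
    by (simp add: power_mult_distrib algebra_simps)
  then show ?thesis using r0 by blast
qed

lemma invariants_on_ray:
  fixes y :: "real^3"
  assumes p: "cmod p = 1" and y: "norm y = 1"
  shows "\<exists>a b c r. cmod a = 1 \<and> cmod b = 1 \<and> cmod c = 1 \<and> a*b*c = p \<and> r > 0 \<and>
    a+b+c = complex_of_real r * Complex (y$1) (y$2) \<and> tri_im a b c = r * y$3"
proof -
  have "(cmod (Complex (y$1) (y$2)))^2 + (y$3)^2 = 1"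
    using y by (simp add: norm_vec_def L2_set_def sum_3 cmod_power2)
  then obtain r where "r > 0"
    and "disc_form p (complex_of_real r * Complex (y$1) (y$2)) = 4 * (r * y$3)^2"
    using disc_form_on_ray[OF p] by blast
  then show ?thesis using realize_invariants[OF p] by blast
qed

section \<open>The map (S^1)^3 \<rightarrow> S^1 \<times> S^2\<close>

definition inv_vec :: "complex \<times> complex \<times> complex \<Rightarrow> real^3" where
  "inv_vec = (\<lambda>(a, b, c). \<chi> i. if i = 1 then Re (a+b+c) else if i = 2 then Im (a+b+c) else tri_im a b c)"

definition cp3_map :: "complex \<times> complex \<times> complex \<Rightarrow> complex \<times> (real^3)" where
  "cp3_map = (\<lambda>(a, b, c). (a*b*c, sgn (inv_vec (a, b, c))))"

lemma inv_vec_components [simp]: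
  "inv_vec (a, b, c) $ 1 = Re (a+b+c)" "inv_vec (a, b, c) $ 2 = Im (a+b+c)"
  "inv_vec (a, b, c) $ 3 = tri_im a b c"
  by (simp_all add: inv_vec_def)

lemma inv_vec_eq_iff:
  "inv_vec (a, b, c) = v \<longleftrightarrow> Re (a+b+c) = v$1 \<and> Im (a+b+c) = v$2 \<and> tri_im a b c = v$3"
  by (auto simp: vec_eq_iff forall_3)

lemma norm_inv_vec_square: "(norm (inv_vec (a, b, c)))^2 = (cmod (a+b+c))^2 + (tri_im a b c)^2"
  by (simp add: inv_vec_def norm_vec_def L2_set_def sum_3 cmod_power2)

text \<open>The invariant vector never vanishes on the torus: if w = 0 then 4\<sigma>^2 = R(p, 0) = 27.\<close>

lemma inv_vec_nonzero:
  assumes "cmod a = 1" "cmod b = 1" "cmod c = 1"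
  shows "inv_vec (a, b, c) \<noteq> 0"
proof
  assume "inv_vec (a, b, c) = 0"
  then have "(cmod (a+b+c))^2 + (tri_im a b c)^2 = 0"
    using norm_inv_vec_square[of a b c] by simp
  then have "a+b+c = 0" "tri_im a b c = 0"
    by (simp_all add: sum_power2_eq_zero_iff)
  then show False using tri_im_square[OF assms] by (simp add: disc_form_def)
qed

lemma continuous_inv_vec: "continuous_on UNIV inv_vec"
  unfolding inv_vec_def tri_im_def case_prod_unfold
proof (intro continuous_on_vec_lambda)
  fix i :: 3
  show "continuous_on UNIV (\<lambda>x. if i = 1 then Re (fst x + fst (snd x) + snd (snd x))
      else if i = 2 then Im (fst x + fst (snd x) + snd (snd x))
      else Im (fst x * cnj (fst (snd x)) + fst (snd x) * cnj (snd (snd x)) + snd (snd x) * cnj (fst x)))"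
    by (cases "i = 1"; cases "i = 2") (simp_all add: continuous_intros)
qed

lemma continuous_cp3_map: "continuous_on (S1 \<times> S1 \<times> S1) cp3_map"
proof -
  have "\<forall>x \<in> S1 \<times> S1 \<times> S1. inv_vec x \<noteq> 0"
    using inv_vec_nonzero by (auto simp: S1_def)
  then have direction: "continuous_on (S1 \<times> S1 \<times> S1) (\<lambda>x. sgn (inv_vec x))"
    by (intro continuous_on_sgn continuous_on_subset[OF continuous_inv_vec subset_UNIV])
  have product: "continuous_on (S1 \<times> S1 \<times> S1) (\<lambda>x. fst x * fst (snd x) * snd (snd x))"
    by (intro continuous_intros)
  have "cp3_map = (\<lambda>x. (fst x * fst (snd x) * snd (snd x), sgn (inv_vec x)))"
    by (auto simp: cp3_map_def)
  then show ?thesis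
    using continuous_on_Pair[OF product direction] by (simp only:)
qed

lemma cp3_map_image: "cp3_map ` (S1 \<times> S1 \<times> S1) = S1 \<times> S2"
proof
  show "cp3_map ` (S1 \<times> S1 \<times> S1) \<subseteq> S1 \<times> S2"
    using inv_vec_nonzero by (auto simp: cp3_map_def S1_def S2_def norm_mult norm_sgn)
next
  show "S1 \<times> S2 \<subseteq> cp3_map ` (S1 \<times> S1 \<times> S1)"
  proof
    fix z assume "z \<in> S1 \<times> S2"
    then obtain p y where z: "z = (p, y)" "cmod p = 1" "norm y = 1"
      by (auto simp: S1_def S2_def)
    obtain a b c r where abc: "cmod a = 1" "cmod b = 1" "cmod c = 1" "a*b*c = p" "r > 0"
      "a+b+c = complex_of_real r * Complex (y$1) (y$2)" "tri_im a b c = r * y$3"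
      using invariants_on_ray[OF z(2,3)] by blast
    then have "inv_vec (a, b, c) = r *\<^sub>R y" by (simp add: inv_vec_eq_iff)
    then have "cp3_map (a, b, c) = z"
      using abc z by (simp add: cp3_map_def sgn_scaleR sgn_div_norm)
    moreover have "(a, b, c) \<in> S1 \<times> S1 \<times> S1" using abc by (simp add: S1_def)
    ultimately show "z \<in> cp3_map ` (S1 \<times> S1 \<times> S1)" by (metis image_eqI)
  qed
qed

lemma cyc_orbit_eq_iff: "cyc_orbit y = cyc_orbit x \<longleftrightarrow> y \<in> cyc_orbit x"
  by (cases x) (auto simp: cyc_orbit_def cycperm_def)

lemma cp3_map_cycperm: "cp3_map (cycperm x) = cp3_map x"
proof (cases x)
  case (fields a b c)
  have "inv_vec (b, c, a) = inv_vec (a, b, c)"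
    by (simp add: inv_vec_eq_iff tri_im_rotate add_ac)
  then show ?thesis by (simp add: fields cp3_map_def cycperm_def mult_ac)
qed

text \<open>Injectivity modulo rotations: equal directions of the invariant vectors differ by a
  positive scale l, which must be 1 by uniqueness along rays; then all invariants agree.\<close>

lemma rotation_of_same_cp3_map:
  assumes u: "cmod a = 1" "cmod b = 1" "cmod c = 1"
    and u': "cmod a' = 1" "cmod b' = 1" "cmod c' = 1"
    and same: "cp3_map (a', b', c') = cp3_map (a, b, c)"
  shows "(a', b', c') \<in> {(a, b, c), (b, c, a), (c, a, b)}"
proof -
  define l where "l = norm (inv_vec (a', b', c')) / norm (inv_vec (a, b, c))"
  have l0: "l > 0" unfolding l_def using inv_vec_nonzero[OF u] inv_vec_nonzero[OF u'] by simp
  have p: "a'*b'*c' = a*b*c" and dir: "sgn (inv_vec (a', b', c')) = sgn (inv_vec (a, b, c))"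
    using same unfolding cp3_map_def by simp_all
  have "inv_vec (a', b', c') = norm (inv_vec (a', b', c')) *\<^sub>R sgn (inv_vec (a', b', c'))"
    using inv_vec_nonzero[OF u'] by (simp add: sgn_div_norm)
  also have "\<dots> = l *\<^sub>R inv_vec (a, b, c)"
    unfolding dir l_def by (simp add: sgn_div_norm divide_inverse_commute)
  finally have "inv_vec (a', b', c') = l *\<^sub>R inv_vec (a, b, c)" .
  then have w: "a'+b'+c' = complex_of_real l * (a+b+c)" and s: "tri_im a' b' c' = l * tri_im a b c"
    by (simp_all add: vec_eq_iff forall_3 complex_eq_iff)
  have "l = 1"
  proof (rule disc_form_scale_unique)
    show "cmod (a*b*c) = 1" using u by (simp add: norm_mult)
    show "disc_form (a*b*c) (a+b+c) = 4 * (tri_im a b c)^2"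
      using tri_im_square[OF u] by simp
    show "disc_form (a*b*c) (complex_of_real l * (a+b+c)) = 4 * (l * tri_im a b c)^2"
      using tri_im_square[OF u'] unfolding p w s by simp
  qed (fact l0)
  then show ?thesis
    using rotation_of_same_invariants[OF u u' p] w s by simp
qed

lemma cp3_map_eq_iff:
  assumes x: "x \<in> S1 \<times> S1 \<times> S1" and y: "y \<in> S1 \<times> S1 \<times> S1"
  shows "cp3_map y = cp3_map x \<longleftrightarrow> cyc_orbit y = cyc_orbit x"
proof
  assume "cp3_map y = cp3_map x"
  moreover obtain a b c a' b' c' where xy: "x = (a, b, c)" "y = (a', b', c')"
    by (cases x, cases y) auto
  moreover have "cmod a = 1" "cmod b = 1" "cmod c = 1" "cmod a' = 1" "cmod b' = 1" "cmod c' = 1"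
    using x y xy by (auto simp: S1_def)
  ultimately have "(a', b', c') \<in> {(a, b, c), (b, c, a), (c, a, b)}"
    using rotation_of_same_cp3_map by simp
  then show "cyc_orbit y = cyc_orbit x"
    unfolding xy cyc_orbit_eq_iff by (simp add: cyc_orbit_def cycperm_def)
next
  assume "cyc_orbit y = cyc_orbit x"
  then have "y \<in> cyc_orbit x" by (simp add: cyc_orbit_eq_iff)
  then show "cp3_map y = cp3_map x"
    using cp3_map_cycperm[of x] cp3_map_cycperm[of "cycperm x"] by (auto simp: cyc_orbit_def)
qed

theorem lemma2p1:
  shows "CP3_S1 homeomorphic_space prod_topology (top_of_set S1) (top_of_set S2)"
  unfolding CP3_S1_def
proof (rule homeomorphic_space_quotient_by_fibres[OF quotient_map_quotient_topology])
  have torus: "torus3 = top_of_set (S1 \<times> S1 \<times> S1)"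
    unfolding torus3_def by simp
  have target: "prod_topology (top_of_set S1) (top_of_set S2) = top_of_set (S1 \<times> S2)"
    by simp
  show "compact_space torus3"
    unfolding torus S1_def by (simp add: compact_space_subtopology compact_Times)
  show "continuous_map torus3 (prod_topology (top_of_set S1) (top_of_set S2)) cp3_map"
    unfolding torus target continuous_map_subtopology_eu
    using continuous_cp3_map cp3_map_image by blast
  show "Hausdorff_space (prod_topology (top_of_set S1) (top_of_set S2))"
    unfolding target by (rule Hausdorff_space_subtopology) simp
  show "cp3_map ` topspace torus3 = topspace (prod_topology (top_of_set S1) (top_of_set S2))"
    unfolding torus target using cp3_map_image by simp
  show "cp3_map x = cp3_map y \<longleftrightarrow> cyc_orbit x = cyc_orbit y"
    if "x \<in> topspace torus3" "y \<in> topspace torus3" for x y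
    using cp3_map_eq_iff[of y x] that unfolding torus by auto
qed

end
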